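(* For every fixed $r\in\mathbb{N}$, the theory $\mathcal{T}_r$ is pseudofinite, and the theory $\mathcal{T}_\infty$ is pseudofinite.
   Context: Work in the language of graphs $\{R\}$. Let $\mathrm{Gr}$ be the axioms of simple graphs ($R$ irreflexive and symmetric) and let $\tau_n$ ($n\geq 3$) be the sentence $\forall y_1,\dots,y_n\,\neg\big(\bigwedge_{i<j}y_i\neq y_j\wedge\bigwedge_{i=1}^{n-1}y_iRy_{i+1}\wedge y_nRy_1\big)$ (no cycle of length $n$). $\mathcal{T}_\infty$ is axiomatized by $\mathrm{Gr}$, all $\tau_n$ ($n\geq 3$), and for each $n<\omega$ the sentence $\sigma_n$: $\forall x\exists y_1,\dots,y_n(\bigwedge_{i<j}y_i\neq y_j\wedge\bigwedge_i xRy_i)$ (every vertex has infinite degree). $\mathcal{T}_r$ is axiomatized by $\mathrm{Gr}$, all $\tau_n$ ($n\geq 3$), and the sentence saying every vertex has exactly $r$ neighbours. (Both theories are complete.) A theory $T$ is pseudofinite if every sentence implied by $T$ has a finite model; equivalently, $T$ has a model elementarily equivalent to an ultraproduct of finite structures. *)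

theory Defs
  imports Main
begin

datatype fm =
    Tru
  | Eq nat nat
  | Rel nat nat
  | Neg fm
  | Conj fm fm
  | Ex nat fm

definition Disj :: "fm \<Rightarrow> fm \<Rightarrow> fm" where
  "Disj a b = Neg (Conj (Neg a) (Neg b))"

definition Imp :: "fm \<Rightarrow> fm \<Rightarrow> fm" where
  "Imp a b = Neg (Conj a (Neg b))"

definition All :: "nat \<Rightarrow> fm \<Rightarrow> fm" where
  "All x a = Neg (Ex x (Neg a))"

primrec freevars :: "fm \<Rightarrow> nat set" where
  "freevars Tru = {}"
| "freevars (Eq x y) = {x, y}"
| "freevars (Rel x y) = {x, y}"
| "freevars (Neg a) = freevars a"
| "freevars (Conj a b) = freevars a \<union> freevars b"
| "freevars (Ex x a) = freevars a - {x}"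

definition sentence :: "fm \<Rightarrow> bool" where
  "sentence a \<longleftrightarrow> freevars a = {}"

primrec sat :: "'a set \<Rightarrow> ('a \<Rightarrow> 'a \<Rightarrow> bool) \<Rightarrow> (nat \<Rightarrow> 'a) \<Rightarrow> fm \<Rightarrow> bool" where
  "sat D R e Tru = True"
| "sat D R e (Eq x y) = (e x = e y)"
| "sat D R e (Rel x y) = R (e x) (e y)"
| "sat D R e (Neg a) = (\<not> sat D R e a)"
| "sat D R e (Conj a b) = (sat D R e a \<and> sat D R e b)"
| "sat D R e (Ex x a) = (\<exists>d\<in>D. sat D R (e(x := d)) a)"

definition holds :: "'a set \<Rightarrow> ('a \<Rightarrow> 'a \<Rightarrow> bool) \<Rightarrow> fm \<Rightarrow> bool" where
  "holds D R a \<longleftrightarrow> (\<forall>e. (\<forall>n. e n \<in> D) \<longrightarrow> sat D R e a)"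

text \<open>Since the language is countable, by downward
  Loewenheim-Skolem it suffices to quantify over structures whose universe is a
  nonempty set of natural numbers (this covers all finite and countable structures
  up to isomorphism).\<close>

definition entails :: "fm set \<Rightarrow> fm \<Rightarrow> bool" where
  "entails T a \<longleftrightarrow>
     (\<forall>(D::nat set) R. D \<noteq> {} \<longrightarrow> (\<forall>b\<in>T. holds D R b) \<longrightarrow> holds D R a)"

definition pseudofinite :: "fm set \<Rightarrow> bool" where
  "pseudofinite T \<longleftrightarrow>
     (\<forall>a. sentence a \<longrightarrow> entails T a \<longrightarrow>
        (\<exists>(D::nat set) R. finite D \<and> D \<noteq> {} \<and> holds D R a))"

definition big_conj :: "fm list \<Rightarrow> fm" where
  "big_conj xs = foldr Conj xs Tru"

definition big_disj :: "fm list \<Rightarrow> fm" where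
  "big_disj xs = Neg (big_conj (map Neg xs))"

definition alls :: "nat list \<Rightarrow> fm \<Rightarrow> fm" where
  "alls xs a = foldr All xs a"

definition exs :: "nat list \<Rightarrow> fm \<Rightarrow> fm" where
  "exs xs a = foldr Ex xs a"

definition distinct_vars :: "nat list \<Rightarrow> fm" where
  "distinct_vars xs =
     big_conj [Neg (Eq (xs ! i) (xs ! j)). i \<leftarrow> [0..<length xs], j \<leftarrow> [0..<length xs], i < j]"

definition Gr :: "fm set" where
  "Gr = {All 0 (Neg (Rel 0 0)), All 0 (All 1 (Imp (Rel 0 1) (Rel 1 0)))}"

text \<open>tau n: no cycle of length n; variables y_1..y_n are 0..n-1.\<close>
definition tau :: "nat \<Rightarrow> fm" where
  "tau n = alls [0..<n]
     (Neg (Conj (distinct_vars [0..<n])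
        (Conj (big_conj [Rel i (Suc i). i \<leftarrow> [0..<n - 1]]) (Rel (n - 1) 0))))"

text \<open>sigma n: every vertex has at least n neighbours; x is variable 0, y_i are 1..n.\<close>
definition sigma :: "nat \<Rightarrow> fm" where
  "sigma n = All 0 (exs [1..<Suc n]
     (Conj (distinct_vars [1..<Suc n]) (big_conj [Rel 0 i. i \<leftarrow> [1..<Suc n]])))"

text \<open>deg_exactly r: every vertex has exactly r neighbours;
  x is variable 0, y_i are 1..r, z is r+1.\<close>
definition deg_exactly :: "nat \<Rightarrow> fm" where
  "deg_exactly r = All 0 (exs [1..<Suc r]
     (Conj (distinct_vars [1..<Suc r])
       (Conj (big_conj [Rel 0 i. i \<leftarrow> [1..<Suc r]])
         (All (Suc r) (Imp (Rel 0 (Suc r)) (big_disj [Eq (Suc r) i. i \<leftarrow> [1..<Suc r]]))))))"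

definition T_r :: "nat \<Rightarrow> fm set" where
  "T_r r = Gr \<union> {tau n | n. n \<ge> 3} \<union> {deg_exactly r}"

definition T_inf :: "fm set" where
  "T_inf = Gr \<union> {tau n | n. n \<ge> 3} \<union> range sigma"

end

theory Submission
  imports Defs "HOL-Library.Countable" "HOL-Combinatorics.Permutations"
begin

text \<open>
  Colour the edges of a graph so that every colour class is the graph of an involution. The free
  product of copies of Z/2, one for each colour, acts on its reduced words; the resulting Cayley
  graph is the regular tree, and disjoint copies of it model T_r (r colours) and T_inf (countably
  many colours). Its finite counterpart has the permutations of the ball of reduced words of
  length at most L as vertices, each colour acting through its letter, truncated to the identity
  where the letter would leave the ball. A nonempty reduced word of length at most L moves the
  empty word, so it fixes no permutation: this graph has no cycle of length at most L.

  Duplicator wins the n-round Ehrenfeucht-Fraisse game between enough copies of both graphs when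
  L = 2^n. With k rounds left she maintains that any two pebbles are joined by the same reduced
  words of length at most 2^k in both graphs, read through a partial bijection between the colours
  those words use. A pebble near an old one is answered along the translated word, after extending
  the bijection to at most 2^(k-1) new colours; a pebble far from all others is answered in an
  unused copy. Only n * 2^n colours are ever matched, which is what the finite graph needs for
  T_inf. So every sentence of quantifier depth n that holds in the tree, in particular every
  consequence of the theory, holds in a finite graph.
\<close>

section \<open>Free reduction of words of involutions\<close>

fun red_cons :: "'a \<Rightarrow> 'a list \<Rightarrow> 'a list" where
  "red_cons i [] = [i]"
| "red_cons i (j # w) = (if i = j then w else i # j # w)"

primrec reduce :: "'a list \<Rightarrow> 'a list" where
  "reduce [] = []"
| "reduce (i # w) = red_cons i (reduce w)"

lemma distinct_adj_red_cons: "distinct_adj w \<Longrightarrow> distinct_adj (red_cons i w)"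
  by (cases w) (auto simp: distinct_adj_Cons dest: distinct_adj_ConsD)

lemma set_red_cons_subset: "set (red_cons i w) \<subseteq> insert i (set w)"
  by (cases w) auto

lemma distinct_adj_reduce: "distinct_adj (reduce w)"
  by (induction w) (auto simp: distinct_adj_red_cons)

lemma red_cons_distinct_adj: "distinct_adj (i # w) \<Longrightarrow> red_cons i w = i # w"
  by (cases w) auto

lemma reduce_id: "distinct_adj w \<Longrightarrow> reduce w = w"
proof (induction w)
  case (Cons i w)
  then have "reduce w = w" by (auto dest: distinct_adj_ConsD)
  with Cons.prems show ?case by (simp add: red_cons_distinct_adj)
qed simp

lemma length_reduce_le: "length (reduce w) \<le> length w"
proof (induction w)
  case (Cons i w)
  then show ?case by (cases "reduce w") auto
qed simp

lemma set_reduce_subset: "set (reduce w) \<subseteq> set w"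
proof (induction w)
  case (Cons i w)
  then show ?case by (cases "reduce w") auto
qed simp

lemma red_cons_red_cons: "distinct_adj w \<Longrightarrow> red_cons i (red_cons i w) = w"
  by (cases w) (auto simp: red_cons_distinct_adj)

lemma reduce_append: "reduce (u @ w) = foldr red_cons u (reduce w)"
  by (induction u) auto

lemma reduce_append_cancel:
  assumes "distinct_adj x" "distinct_adj y"
  shows "\<exists>c x1 y1. x = x1 @ c \<and> y = rev c @ y1 \<and> reduce (x @ y) = x1 @ y1"
  using assms(1)
proof (induction x)
  case Nil
  show ?case using assms(2) by (auto simp: reduce_id)
next
  case (Cons i x)
  have "distinct_adj x" using Cons.prems by (rule distinct_adj_ConsD)
  then obtain c x1 y1 where x: "x = x1 @ c" and y: "y = rev c @ y1"
    and red: "reduce (x @ y) = x1 @ y1"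
    using Cons.IH by blast
  have red_i: "reduce ((i # x) @ y) = red_cons i (x1 @ y1)"
    using red by simp
  show ?case
  proof (cases x1)
    case (Cons a x1')
    have "i \<noteq> a" using Cons.prems x Cons by simp
    then have "red_cons i (x1 @ y1) = i # x1 @ y1" using Cons by simp
    then show ?thesis using x y red_i by (intro exI[of _ c] exI[of _ "i # x1"] exI[of _ y1]) simp
  next
    case Nil
    note x1 = this
    show ?thesis
    proof (cases y1)
      case Nil
      then show ?thesis using x y red_i x1
        by (intro exI[of _ c] exI[of _ "[i]"] exI[of _ "[]"]) simp
    next
      case (Cons b y1')
      show ?thesis
      proof (cases "b = i")
        case True
        then show ?thesis using x y red_i x1 Cons
          by (intro exI[of _ "i # c"] exI[of _ "[]"] exI[of _ y1']) simp
      next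
        case False
        then show ?thesis using x y red_i x1 Cons
          by (intro exI[of _ c] exI[of _ "[i]"] exI[of _ y1]) simp
      qed
    qed
  qed
qed

lemma set_subset_reduce_append:
  assumes "distinct_adj u" "distinct_adj w"
  shows "set u \<subseteq> set (reduce (u @ w)) \<union> set w"
  using reduce_append_cancel[OF assms] by auto

lemma reduce_append_neq:
  assumes "distinct_adj v" "distinct_adj w" "v \<noteq> []"
  shows "reduce (v @ w) \<noteq> w"
proof
  assume eq: "reduce (v @ w) = w"
  obtain c x1 y1 where v: "v = x1 @ c" and w: "w = rev c @ y1" and red: "reduce (v @ w) = x1 @ y1"
    using reduce_append_cancel[OF assms(1,2)] by blast
  have x1: "x1 = rev c" using eq red w by simp
  with v assms(3) have "c \<noteq> []" by auto
  with v x1 assms(1) show False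
    by (auto simp: distinct_adj_append_iff last_rev)
qed

lemma red_cons_map: "inj_on \<pi> (insert i (set w)) \<Longrightarrow> map \<pi> (red_cons i w) = red_cons (\<pi> i) (map \<pi> w)"
  by (cases w) (auto simp: inj_on_def)

lemma reduce_map: "inj_on \<pi> (set w) \<Longrightarrow> reduce (map \<pi> w) = map \<pi> (reduce w)"
proof (induction w)
  case (Cons i w)
  have "inj_on \<pi> (insert i (set (reduce w)))"
    using Cons.prems set_reduce_subset[of w] by (auto intro: inj_on_subset)
  moreover have "inj_on \<pi> (set w)"
    using Cons.prems by (auto intro: inj_on_subset)
  ultimately show ?case using Cons.IH by (simp add: red_cons_map)
qed simp

section \<open>Graphs coloured by involutions\<close>

definition coloured_edge :: "('c \<Rightarrow> 'a \<Rightarrow> 'a) \<Rightarrow> 'c set \<Rightarrow> 'a \<Rightarrow> 'a \<Rightarrow> bool" where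
  "coloured_edge f S x y \<longleftrightarrow> (\<exists>i\<in>S. y = f i x)"

definition near :: "('c \<Rightarrow> 'a \<Rightarrow> 'a) \<Rightarrow> 'c set \<Rightarrow> nat \<Rightarrow> 'a \<Rightarrow> 'a \<Rightarrow> bool" where
  "near f S R x y \<longleftrightarrow> (\<exists>w. set w \<subseteq> S \<and> length w \<le> R \<and> foldr f w x = y)"

lemma near_mono: "near f S R x y \<Longrightarrow> R \<le> R' \<Longrightarrow> near f S R' x y"
  unfolding near_def using le_trans by blast

locale involutions =
  fixes A :: "'a set" and f :: "'c \<Rightarrow> 'a \<Rightarrow> 'a" and S :: "'c set"
  assumes closed: "i \<in> S \<Longrightarrow> x \<in> A \<Longrightarrow> f i x \<in> A"
    and involutive: "i \<in> S \<Longrightarrow> x \<in> A \<Longrightarrow> f i (f i x) = x"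
begin

lemma foldr_closed: "set w \<subseteq> S \<Longrightarrow> x \<in> A \<Longrightarrow> foldr f w x \<in> A"
  by (induction w) (auto simp: closed)

lemma foldr_red_cons:
  assumes "i \<in> S" "set w \<subseteq> S" "x \<in> A"
  shows "foldr f (red_cons i w) x = f i (foldr f w x)"
proof (cases w)
  case (Cons j w')
  have "foldr f w' x \<in> A" using Cons assms foldr_closed by simp
  then show ?thesis using Cons assms(1) by (auto simp: involutive)
qed simp

lemma foldr_reduce: "set w \<subseteq> S \<Longrightarrow> x \<in> A \<Longrightarrow> foldr f (reduce w) x = foldr f w x"
proof (induction w)
  case (Cons i w)
  then have "set (reduce w) \<subseteq> S" using set_reduce_subset[of w] by auto
  then show ?case using Cons by (simp add: foldr_red_cons)
qed simp

lemma foldr_foldr: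
  "set u \<subseteq> S \<Longrightarrow> set w \<subseteq> S \<Longrightarrow> x \<in> A \<Longrightarrow> foldr f u (foldr f w x) = foldr f (reduce (u @ w)) x"
  by (simp add: foldr_reduce)

lemma foldr_rev_cancel: "set w \<subseteq> S \<Longrightarrow> x \<in> A \<Longrightarrow> foldr f (rev w) (foldr f w x) = x"
proof (induction w arbitrary: x)
  case (Cons i w)
  then show ?case by (simp add: foldr_closed involutive)
qed simp

lemma foldr_eq_iff_rev:
  assumes "set w \<subseteq> S" "x \<in> A" "y \<in> A"
  shows "foldr f w x = y \<longleftrightarrow> foldr f (rev w) y = x"
  using foldr_rev_cancel[of w x] foldr_rev_cancel[of "rev w" y] assms by auto

lemma near_sym: "x \<in> A \<Longrightarrow> y \<in> A \<Longrightarrow> near f S R x y \<longleftrightarrow> near f S R y x"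
  unfolding near_def by (metis foldr_eq_iff_rev length_rev set_rev)

lemma near_reduced:
  assumes "near f S R x y" "x \<in> A"
  obtains w where "distinct_adj w" "set w \<subseteq> S" "length w \<le> R" "foldr f w x = y"
proof -
  obtain w where "set w \<subseteq> S" "length w \<le> R" "foldr f w x = y"
    using assms(1) unfolding near_def by blast
  then show thesis
    using that[of "reduce w"] distinct_adj_reduce length_reduce_le set_reduce_subset foldr_reduce assms(2)
    by (meson order_trans)
qed

lemma colours_of_shifted_word:
  assumes colours: "\<And>v. distinct_adj v \<Longrightarrow> set v \<subseteq> S \<Longrightarrow> length v \<le> 2 * R \<Longrightarrow> foldr f v x = y \<Longrightarrow> set v \<subseteq> Q"
    and u: "distinct_adj u" "set u \<subseteq> S" "length u \<le> R"
    and w: "distinct_adj w" "set w \<subseteq> S" "length w \<le> R"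
    and "x \<in> A" and moved: "foldr f u (foldr f w x) = y"
  shows "set u \<subseteq> Q \<union> set w"
proof -
  have "foldr f (reduce (u @ w)) x = y" using foldr_foldr[OF u(2) w(2) \<open>x \<in> A\<close>] moved by simp
  moreover have "set (reduce (u @ w)) \<subseteq> S" using set_reduce_subset[of "u @ w"] u(2) w(2) by auto
  moreover have "length (reduce (u @ w)) \<le> 2 * R" using length_reduce_le[of "u @ w"] u(3) w(3) by simp
  ultimately have "set (reduce (u @ w)) \<subseteq> Q" using colours[OF distinct_adj_reduce] by blast
  then show ?thesis using set_subset_reduce_append[OF u(1) w(1)] by blast
qed

lemma distinct_adj_walk:
  assumes walk: "\<And>t. t < m \<Longrightarrow> I t \<in> S \<and> y (Suc t) = f (I t) (y t)" and "y 0 \<in> A"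
    and no_backtrack: "\<And>t. Suc (Suc t) \<le> m \<Longrightarrow> y (Suc (Suc t)) \<noteq> y t"
  shows "distinct_adj (map I [0..<m])"
proof -
  have yA: "t \<le> m \<Longrightarrow> y t \<in> A" for t
    by (induction t) (use walk \<open>y 0 \<in> A\<close> closed in auto)
  show ?thesis unfolding distinct_adj_conv_nth
  proof (intro allI impI)
    fix t assume "Suc t < length (map I [0..<m])"
    then have t: "Suc (Suc t) \<le> m" by simp
    show "map I [0..<m] ! t \<noteq> map I [0..<m] ! Suc t"
    proof
      assume "map I [0..<m] ! t = map I [0..<m] ! Suc t"
      then have "I (Suc t) = I t" using t by simp
      then have "y (Suc (Suc t)) = y t"
        using walk[of t] walk[of "Suc t"] involutive yA[of t] t by simp
      with no_backtrack t show False by blast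
    qed
  qed
qed

lemma coloured_edge_sym: "x \<in> A \<Longrightarrow> coloured_edge f S x y \<Longrightarrow> coloured_edge f S y x"
  unfolding coloured_edge_def by (metis involutive)

end

lemma foldr_walk:
  "(\<And>t. t < m \<Longrightarrow> y (Suc t) = f (I t) (y t)) \<Longrightarrow> foldr f (rev (map I [0..<m])) (y 0) = y m"
  by (induction m) auto

locale large_girth = involutions +
  fixes L :: nat
  assumes no_short_cycle:
    "x \<in> A \<Longrightarrow> distinct_adj w \<Longrightarrow> set w \<subseteq> S \<Longrightarrow> w \<noteq> [] \<Longrightarrow> length w \<le> L \<Longrightarrow> foldr f w x \<noteq> x"

context large_girth
begin

lemma coloured_edge_irrefl:
  "1 \<le> L \<Longrightarrow> x \<in> A \<Longrightarrow> \<not> coloured_edge f S x x"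
  unfolding coloured_edge_def using no_short_cycle[of x "[_]"] by force

lemma neighbours_distinct:
  assumes "i \<in> S" "j \<in> S" "i \<noteq> j" "x \<in> A" "2 \<le> L"
  shows "f i x \<noteq> f j x"
proof
  assume "f i x = f j x"
  then have "foldr f [j, i] x = x" using assms(2,4) by (simp add: involutive)
  then show False using no_short_cycle[of x "[j, i]"] assms by auto
qed

lemma no_short_graph_cycle:
  assumes "3 \<le> n" "n \<le> L" "\<And>t. t < n \<Longrightarrow> y t \<in> A"
    and distinct: "\<And>i j. i < n \<Longrightarrow> j < n \<Longrightarrow> i \<noteq> j \<Longrightarrow> y i \<noteq> y j"
    and edge: "\<And>t. t < n \<Longrightarrow> coloured_edge f S (y t) (y (Suc t mod n))"
  shows False
proof -
  have "\<forall>t. \<exists>i. t < n \<longrightarrow> i \<in> S \<and> y (Suc t mod n) = f i (y t)"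
    using edge unfolding coloured_edge_def by blast
  then obtain I where I: "\<And>t. t < n \<Longrightarrow> I t \<in> S \<and> y (Suc t mod n) = f (I t) (y t)"
    by metis
  define z where "z t = y (t mod n)" for t
  have walk: "t < n \<Longrightarrow> I t \<in> S \<and> z (Suc t) = f (I t) (z t)" for t
    using I unfolding z_def by simp
  have "z (Suc (Suc t)) \<noteq> z t" if "Suc (Suc t) \<le> n" for t
    using distinct[of "Suc (Suc t) mod n" t] that \<open>3 \<le> n\<close> unfolding z_def
    by (cases "Suc (Suc t) = n") auto
  then have "distinct_adj (map I [0..<n])"
    using distinct_adj_walk[of n I z] walk assms(3) \<open>3 \<le> n\<close> unfolding z_def by simp
  moreover have "foldr f (rev (map I [0..<n])) (z 0) = z 0"
    using foldr_walk[of n z f I] walk unfolding z_def by simp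
  moreover have "set (rev (map I [0..<n])) \<subseteq> S"
    using walk by auto
  ultimately show False
    using no_short_cycle[of "z 0" "rev (map I [0..<n])"] assms(1-3) unfolding z_def by auto
qed

end

section \<open>The axioms in graphs of large girth\<close>

lemma sat_All: "sat D R e (All x a) \<longleftrightarrow> (\<forall>d\<in>D. sat D R (e(x := d)) a)"
  by (simp add: All_def)

lemma sat_Imp: "sat D R e (Imp a b) \<longleftrightarrow> (sat D R e a \<longrightarrow> sat D R e b)"
  by (simp add: Imp_def)

lemma sat_big_conj: "sat D R e (big_conj xs) \<longleftrightarrow> (\<forall>a\<in>set xs. sat D R e a)"
  by (induction xs) (auto simp: big_conj_def)

lemma sat_big_disj: "sat D R e (big_disj xs) \<longleftrightarrow> (\<exists>a\<in>set xs. sat D R e a)"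
  by (simp add: big_disj_def sat_big_conj)

lemma sat_distinct_vars:
  "sat D R e (distinct_vars xs) \<longleftrightarrow> (\<forall>i j. i < j \<longrightarrow> j < length xs \<longrightarrow> e (xs ! i) \<noteq> e (xs ! j))"
  unfolding distinct_vars_def sat_big_conj by auto

lemma sat_allsI:
  assumes "\<And>e'. (\<And>v. v \<notin> set xs \<Longrightarrow> e' v = e v) \<Longrightarrow> (\<And>v. v \<in> set xs \<Longrightarrow> e' v \<in> D) \<Longrightarrow> sat D R e' a"
  shows "sat D R e (alls xs a)"
  using assms
proof (induction xs arbitrary: e)
  case Nil
  then show ?case by (simp add: alls_def)
next
  case (Cons x xs)
  have "sat D R (e(x := d)) (alls xs a)" if "d \<in> D" for d
  proof (rule Cons.IH)
    fix e' assume agree: "\<And>v. v \<notin> set xs \<Longrightarrow> e' v = (e(x := d)) v"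
      and inD: "\<And>v. v \<in> set xs \<Longrightarrow> e' v \<in> D"
    show "sat D R e' a"
    proof (rule Cons.prems)
      show "e' v = e v" if "v \<notin> set (x # xs)" for v
        using agree[of v] that by simp
      show "e' v \<in> D" if "v \<in> set (x # xs)" for v
        using agree[of v] inD[of v] that \<open>d \<in> D\<close> by (cases "v \<in> set xs") auto
    qed
  qed
  then show ?case by (simp add: alls_def sat_All)
qed

lemma sat_exsI:
  assumes "\<And>v. v \<notin> set xs \<Longrightarrow> e' v = e v" "\<And>v. v \<in> set xs \<Longrightarrow> e' v \<in> D" "sat D R e' a"
  shows "sat D R e (exs xs a)"
  using assms
proof (induction xs arbitrary: e)
  case Nil
  then have "e' = e" by auto
  with Nil show ?case by (simp add: exs_def)
next
  case (Cons x xs)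
  have "sat D R (e(x := e' x)) (exs xs a)"
    by (rule Cons.IH) (use Cons.prems in auto)
  then show ?case using Cons.prems(2) by (auto simp: exs_def)
qed

context large_girth
begin

lemma holds_Gr: "1 \<le> L \<Longrightarrow> \<psi> \<in> Gr \<Longrightarrow> holds A (coloured_edge f S) \<psi>"
  unfolding Gr_def holds_def
  by (auto simp: sat_All sat_Imp coloured_edge_irrefl intro: coloured_edge_sym)

lemma holds_tau:
  assumes "3 \<le> n" "n \<le> L"
  shows "holds A (coloured_edge f S) (tau n)"
  unfolding holds_def tau_def
proof (intro allI impI sat_allsI)
  fix e' :: "nat \<Rightarrow> 'a"
  assume "\<And>v. v \<in> set [0..<n] \<Longrightarrow> e' v \<in> A"
  then have eA: "v < n \<Longrightarrow> e' v \<in> A" for v by simp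
  show "sat A (coloured_edge f S) e' (Neg (Conj (distinct_vars [0..<n])
      (Conj (big_conj [Rel i (Suc i). i \<leftarrow> [0..<n - 1]]) (Rel (n - 1) 0))))"
  proof (simp only: sat.simps, rule notI, elim conjE)
    assume "sat A (coloured_edge f S) e' (distinct_vars [0..<n])"
    then have "\<forall>i j. i < j \<longrightarrow> j < n \<longrightarrow> e' i \<noteq> e' j"
      by (simp add: sat_distinct_vars)
    then have distinct: "e' i \<noteq> e' j" if "i < n" "j < n" "i \<noteq> j" for i j
      using that by (metis linorder_neqE_nat)
    assume "sat A (coloured_edge f S) e' (big_conj [Rel i (Suc i). i \<leftarrow> [0..<n - 1]])"
      and last: "coloured_edge f S (e' (n - 1)) (e' 0)"
    then have "coloured_edge f S (e' t) (e' (Suc t))" if "Suc t < n" for t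
      using that by (auto simp: sat_big_conj)
    then have edge: "coloured_edge f S (e' t) (e' (Suc t mod n))" if "t < n" for t
    proof (cases "Suc t < n")
      case False
      then have "Suc t = n" using that by simp
      then show ?thesis using last by (metis diff_Suc_1 mod_self)
    qed (use that in auto)
    show False by (rule no_short_graph_cycle[of n e', OF assms eA distinct edge])
  qed
qed

lemma sat_neighbours:
  assumes "d \<in> A" "inj_on c {0..<m}" "c ` {0..<m} \<subseteq> S" "2 \<le> L"
    and "e 0 = d" "\<And>i. i < m \<Longrightarrow> e (Suc i) = f (c i) d"
  shows "sat A (coloured_edge f S) e (distinct_vars [1..<Suc m])"
    and "sat A (coloured_edge f S) e (big_conj [Rel 0 i. i \<leftarrow> [1..<Suc m]])"
proof -
  have "f (c i) d \<noteq> f (c j) d" if "i < j" "j < m" for i j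
  proof -
    have "c i \<noteq> c j" using inj_on_eq_iff[OF assms(2)] that by simp
    moreover have "c i \<in> S" "c j \<in> S" using assms(3) that by auto
    ultimately show ?thesis using neighbours_distinct assms(1,4) by blast
  qed
  then show "sat A (coloured_edge f S) e (distinct_vars [1..<Suc m])"
    unfolding sat_distinct_vars using assms(6) by (auto simp del: upt_Suc)
  have "coloured_edge f S (e 0) (e i)" if i: "1 \<le> i" "i \<le> m" for i
  proof -
    obtain k where k: "i = Suc k" "k < m" using i by (cases i) auto
    then have "c k \<in> S" using assms(3) by auto
    then show ?thesis unfolding coloured_edge_def using k assms(5,6) by auto
  qed
  then show "sat A (coloured_edge f S) e (big_conj [Rel 0 i. i \<leftarrow> [1..<Suc m]])"
    unfolding sat_big_conj by (auto simp del: upt_Suc)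
qed

lemma sat_exs_neighbours:
  assumes "d \<in> A" "c ` {0..<m} \<subseteq> S"
    and "\<And>e'. e' 0 = d \<Longrightarrow> (\<And>i. i < m \<Longrightarrow> e' (Suc i) = f (c i) d) \<Longrightarrow> sat A (coloured_edge f S) e' \<psi>"
  shows "sat A (coloured_edge f S) (e(0 := d)) (exs [1..<Suc m] \<psi>)"
proof (rule sat_exsI)
  define e' where "e' v = (if v = 0 then d else if v \<le> m then f (c (v - 1)) d else e v)" for v
  show "sat A (coloured_edge f S) e' \<psi>"
    by (rule assms(3)) (simp_all add: e'_def)
  show "e' v = (e(0 := d)) v" if "v \<notin> set [1..<Suc m]" for v
    using that by (auto simp: e'_def)
  show "e' v \<in> A" if "v \<in> set [1..<Suc m]" for v
  proof -
    have "v \<noteq> 0" "v \<le> m" using that by auto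
    moreover from this have "c (v - 1) \<in> S" using assms(2) by (simp add: image_subset_iff)
    ultimately show ?thesis using assms(1) closed by (simp add: e'_def)
  qed
qed

lemma holds_deg_exactly:
  assumes "finite S" "card S = r" "2 \<le> L"
  shows "holds A (coloured_edge f S) (deg_exactly r)"
proof -
  obtain c where c: "bij_betw c {0..<r} S"
    using ex_bij_betw_nat_finite[OF assms(1)] assms(2) by blast
  then have inj: "inj_on c {0..<r}" and image: "c ` {0..<r} = S"
    by (auto simp: bij_betw_def)
  have "sat A (coloured_edge f S) e' (Conj (distinct_vars [1..<Suc r])
      (Conj (big_conj [Rel 0 i. i \<leftarrow> [1..<Suc r]])
        (All (Suc r) (Imp (Rel 0 (Suc r)) (big_disj [Eq (Suc r) i. i \<leftarrow> [1..<Suc r]])))))"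
    if "d \<in> A" and e': "e' 0 = d" "\<And>i. i < r \<Longrightarrow> e' (Suc i) = f (c i) d" for e' d
  proof -
    have "sat A (coloured_edge f S) (e'(Suc r := z)) (big_disj [Eq (Suc r) i. i \<leftarrow> [1..<Suc r]])"
      if rel: "sat A (coloured_edge f S) (e'(Suc r := z)) (Rel 0 (Suc r))" for z
    proof -
      obtain i where "i < r" "z = f (c i) d"
        using rel e'(1) image by (auto simp: coloured_edge_def)
      then show ?thesis
        unfolding sat_big_disj using e'(2)
        by (intro bexI[of _ "Eq (Suc r) (Suc i)"]) (auto simp del: upt_Suc)
    qed
    then show ?thesis
      using sat_neighbours[OF \<open>d \<in> A\<close> inj _ assms(3) e'] image by (simp add: sat_All sat_Imp)
  qed
  then show ?thesis
    unfolding holds_def deg_exactly_def sat_All using image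
    by (intro allI impI ballI sat_exs_neighbours[where c = c]) auto
qed

lemma holds_sigma:
  assumes "infinite S" "2 \<le> L"
  shows "holds A (coloured_edge f S) (sigma m)"
proof -
  obtain C where C: "C \<subseteq> S" "finite C" "card C = m"
    using infinite_arbitrarily_large[OF assms(1)] by blast
  obtain c where "bij_betw c {0..<m} C"
    using ex_bij_betw_nat_finite[OF C(2)] C(3) by blast
  then have inj: "inj_on c {0..<m}" and image: "c ` {0..<m} \<subseteq> S"
    using C(1) by (auto simp: bij_betw_def)
  have "sat A (coloured_edge f S) e' (Conj (distinct_vars [1..<Suc m]) (big_conj [Rel 0 i. i \<leftarrow> [1..<Suc m]]))"
    if "d \<in> A" and e': "e' 0 = d" "\<And>i. i < m \<Longrightarrow> e' (Suc i) = f (c i) d" for e' d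
    using sat_neighbours[OF that(1) inj image assms(2) e'] by simp
  then show ?thesis
    unfolding holds_def sigma_def sat_All using image
    by (intro allI impI ballI sat_exs_neighbours[where c = c]) auto
qed

end

section \<open>An Ehrenfeucht-Fraisse game\<close>

definition colour_map :: "'c set \<Rightarrow> 'd set \<Rightarrow> ('c \<Rightarrow> 'd) \<Rightarrow> 'c set \<Rightarrow> bool" where
  "colour_map S S' \<pi> P \<longleftrightarrow> finite P \<and> P \<subseteq> S \<and> inj_on \<pi> P \<and> \<pi> ` P \<subseteq> S'"

definition colours_fit :: "'c set \<Rightarrow> 'd set \<Rightarrow> nat \<Rightarrow> bool" where
  "colours_fit S S' Cap \<longleftrightarrow> infinite S' \<or> (\<forall>Z \<subseteq> S. finite Z \<longrightarrow> card Z \<le> Cap \<longrightarrow> card Z \<le> card S')"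

lemma colour_map_swap: "colour_map S S' \<pi> P \<Longrightarrow> colour_map S' S (inv_into P \<pi>) (\<pi> ` P)"
  unfolding colour_map_def by (auto intro: inj_on_inv_into inv_into_into)

lemma free_colours:
  assumes "colour_map S S' \<pi> P" "colours_fit S S' Cap" "finite X" "X \<subseteq> S" "card P + card X \<le> Cap"
  obtains g where "inj_on g (X - P)" "g ` (X - P) \<subseteq> S' - \<pi> ` P"
proof -
  have P: "finite P" "P \<subseteq> S" "inj_on \<pi> P" "\<pi> ` P \<subseteq> S'"
    using assms(1) unfolding colour_map_def by auto
  have X: "finite (X - P)" using assms(3) by simp
  show thesis
  proof (cases "finite S'")
    case False
    then have "infinite (S' - \<pi> ` P)" using P(1) by simp
    then obtain C where C: "C \<subseteq> S' - \<pi> ` P" "finite C" "card C = card (X - P)"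
      using infinite_arbitrarily_large[of _ "card (X - P)"] by metis
    obtain g where "g ` (X - P) \<subseteq> C" "inj_on g (X - P)"
      using card_le_inj[OF X C(2)] C(3) by auto
    then show ?thesis using that C(1) by blast
  next
    case True
    have "card (P \<union> X) \<le> Cap" using card_Un_le[of P X] assms(5) by linarith
    moreover have "P \<union> X \<subseteq> S" "finite (P \<union> X)" using P(1,2) assms(3,4) by auto
    ultimately have "card (P \<union> X) \<le> card S'"
      using assms(2) True unfolding colours_fit_def by blast
    moreover have "card (P \<union> X) = card P + card (X - P)"
      using card_Un_disjoint[OF P(1) X] by (simp add: Un_Diff_cancel)
    moreover have "card (S' - \<pi> ` P) = card S' - card P"
      using P True by (simp add: card_Diff_subset card_image)
    ultimately have "card (X - P) \<le> card (S' - \<pi> ` P)" by simp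
    then obtain g where "g ` (X - P) \<subseteq> S' - \<pi> ` P" "inj_on g (X - P)"
      using card_le_inj[OF X finite_Diff[OF True]] by blast
    then show ?thesis using that by blast
  qed
qed

lemma colour_map_extend:
  assumes "colour_map S S' \<pi> P" "colours_fit S S' Cap" "finite X" "X \<subseteq> S" "card P + card X \<le> Cap"
  obtains \<pi>' where "colour_map S S' \<pi>' (P \<union> X)" "\<forall>i\<in>P. \<pi>' i = \<pi> i"
proof -
  have P: "finite P" "P \<subseteq> S" "inj_on \<pi> P" "\<pi> ` P \<subseteq> S'"
    using assms(1) unfolding colour_map_def by auto
  obtain g where g: "inj_on g (X - P)" "g ` (X - P) \<subseteq> S' - \<pi> ` P"
    using free_colours[OF assms] by blast
  define \<pi>' where "\<pi>' i = (if i \<in> P then \<pi> i else g i)" for i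
  have "inj_on \<pi>' P" using P(3) by (simp add: \<pi>'_def inj_on_def)
  moreover have "inj_on \<pi>' (X - P)" using g(1) by (simp add: \<pi>'_def inj_on_def)
  moreover have "\<pi>' ` P \<inter> \<pi>' ` (X - P) = {}" using g(2) by (auto simp: \<pi>'_def)
  ultimately have "inj_on \<pi>' (P \<union> (X - P))" unfolding inj_on_Un by blast
  moreover have "\<pi>' ` (P \<union> X) \<subseteq> S'" using P(4) g(2) by (auto simp: \<pi>'_def)
  ultimately have "colour_map S S' \<pi>' (P \<union> X)"
    using P(1,2) assms(3,4) unfolding colour_map_def by (metis Un_Diff_cancel finite_UnI le_sup_iff)
  then show thesis using that by (simp add: \<pi>'_def)
qed

text \<open>The invariant of the game for one pair of pebbles.\<close>

definition matched_pair ::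
  "('c \<Rightarrow> 'a \<Rightarrow> 'a) \<Rightarrow> 'c set \<Rightarrow> ('d \<Rightarrow> 'b \<Rightarrow> 'b) \<Rightarrow> 'd set \<Rightarrow> nat \<Rightarrow> ('c \<Rightarrow> 'd) \<Rightarrow> 'c set \<Rightarrow>
    'a \<Rightarrow> 'a \<Rightarrow> 'b \<Rightarrow> 'b \<Rightarrow> bool" where
  "matched_pair fA S fB S' R \<pi> P x y x' y' \<longleftrightarrow>
     (\<forall>w. distinct_adj w \<longrightarrow> set w \<subseteq> S \<longrightarrow> length w \<le> R \<longrightarrow> foldr fA w x = y \<longrightarrow> set w \<subseteq> P) \<and>
     (\<forall>w. distinct_adj w \<longrightarrow> set w \<subseteq> S' \<longrightarrow> length w \<le> R \<longrightarrow> foldr fB w x' = y' \<longrightarrow> set w \<subseteq> \<pi> ` P) \<and>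
     (\<forall>w. distinct_adj w \<longrightarrow> set w \<subseteq> P \<longrightarrow> length w \<le> R \<longrightarrow>
        (foldr fA w x = y \<longleftrightarrow> foldr fB (map \<pi> w) x' = y'))"

lemma matched_pairI:
  assumes "\<And>w. distinct_adj w \<Longrightarrow> set w \<subseteq> S \<Longrightarrow> length w \<le> R \<Longrightarrow> foldr fA w x = y \<Longrightarrow> set w \<subseteq> P"
    and "\<And>w. distinct_adj w \<Longrightarrow> set w \<subseteq> S' \<Longrightarrow> length w \<le> R \<Longrightarrow> foldr fB w x' = y' \<Longrightarrow> set w \<subseteq> \<pi> ` P"
    and "\<And>w. distinct_adj w \<Longrightarrow> set w \<subseteq> P \<Longrightarrow> length w \<le> R \<Longrightarrow>
      foldr fA w x = y \<longleftrightarrow> foldr fB (map \<pi> w) x' = y'"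
  shows "matched_pair fA S fB S' R \<pi> P x y x' y'"
  using assms unfolding matched_pair_def by blast

lemma matched_pair_colours_left:
  "matched_pair fA S fB S' R \<pi> P x y x' y' \<Longrightarrow> distinct_adj w \<Longrightarrow> set w \<subseteq> S \<Longrightarrow> length w \<le> R \<Longrightarrow>
    foldr fA w x = y \<Longrightarrow> set w \<subseteq> P"
  unfolding matched_pair_def by blast

lemma matched_pair_colours_right:
  "matched_pair fA S fB S' R \<pi> P x y x' y' \<Longrightarrow> distinct_adj w \<Longrightarrow> set w \<subseteq> S' \<Longrightarrow> length w \<le> R \<Longrightarrow>
    foldr fB w x' = y' \<Longrightarrow> set w \<subseteq> \<pi> ` P"
  unfolding matched_pair_def by blast

lemma matched_pair_foldr_iff:
  "matched_pair fA S fB S' R \<pi> P x y x' y' \<Longrightarrow> distinct_adj w \<Longrightarrow> set w \<subseteq> P \<Longrightarrow> length w \<le> R \<Longrightarrow>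
    foldr fA w x = y \<longleftrightarrow> foldr fB (map \<pi> w) x' = y'"
  unfolding matched_pair_def by blast

lemma matched_pair_mono:
  "matched_pair fA S fB S' R \<pi> P x y x' y' \<Longrightarrow> R' \<le> R \<Longrightarrow> matched_pair fA S fB S' R' \<pi> P x y x' y'"
  unfolding matched_pair_def by auto

lemma matched_pair_eq: "matched_pair fA S fB S' R \<pi> P x y x' y' \<Longrightarrow> x = y \<longleftrightarrow> x' = y'"
  using matched_pair_foldr_iff[of fA S fB S' R \<pi> P x y x' y' "[]"] by simp

lemma matched_pair_edge:
  assumes "matched_pair fA S fB S' R \<pi> P x y x' y'" "colour_map S S' \<pi> P" "1 \<le> R"
  shows "coloured_edge fA S x y \<longleftrightarrow> coloured_edge fB S' x' y'"
proof
  assume "coloured_edge fA S x y"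
  then obtain i where i: "i \<in> S" "foldr fA [i] x = y" by (auto simp: coloured_edge_def)
  then have "i \<in> P" using matched_pair_colours_left[OF assms(1), of "[i]"] assms(3) by simp
  then show "coloured_edge fB S' x' y'"
    using i matched_pair_foldr_iff[OF assms(1), of "[i]"] assms(2,3)
    by (auto simp: coloured_edge_def colour_map_def)
next
  assume "coloured_edge fB S' x' y'"
  then obtain j where j: "j \<in> S'" "foldr fB [j] x' = y'" by (auto simp: coloured_edge_def)
  then obtain i where "i \<in> P" "j = \<pi> i"
    using matched_pair_colours_right[OF assms(1), of "[j]"] assms(3) by auto
  then show "coloured_edge fA S x y"
    using j matched_pair_foldr_iff[OF assms(1), of "[i]"] assms(2,3)
    by (auto simp: coloured_edge_def colour_map_def)
qed

lemma matched_pair_swap: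
  assumes "matched_pair fA S fB S' R \<pi> P x y x' y'" "colour_map S S' \<pi> P"
  shows "matched_pair fB S' fA S R (inv_into P \<pi>) (\<pi> ` P) x' y' x y"
proof (rule matched_pairI)
  have inj: "inj_on \<pi> P" using assms(2) by (simp add: colour_map_def)
  show "set w \<subseteq> \<pi> ` P" if "distinct_adj w" "set w \<subseteq> S'" "length w \<le> R" "foldr fB w x' = y'" for w
    using matched_pair_colours_right[OF assms(1)] that by blast
  show "set w \<subseteq> inv_into P \<pi> ` \<pi> ` P" if "distinct_adj w" "set w \<subseteq> S" "length w \<le> R" "foldr fA w x = y" for w
    using matched_pair_colours_left[OF assms(1)] that inj by simp
  show "foldr fB w x' = y' \<longleftrightarrow> foldr fA (map (inv_into P \<pi>) w) x = y"
    if "distinct_adj w" "set w \<subseteq> \<pi> ` P" "length w \<le> R" for w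
  proof -
    let ?v = "map (inv_into P \<pi>) w"
    have "map \<pi> ?v = w" using that(2) by (induction w) (auto simp: f_inv_into_f)
    moreover have "distinct_adj ?v"
      using that(1,2) by (auto intro: distinct_adj_mapI inj_on_subset[OF inj_on_inv_into])
    moreover have "set ?v \<subseteq> P" using that(2) by (auto intro: inv_into_into)
    ultimately show ?thesis
      using matched_pair_foldr_iff[OF assms(1), of ?v] that(3) by simp
  qed
qed

lemma matched_pair_extend:
  assumes "matched_pair fA S fB S' R \<pi> P x y x' y'" "colour_map S S' \<pi>' P'" "P \<subseteq> P'"
    and "\<forall>i\<in>P. \<pi>' i = \<pi> i"
  shows "matched_pair fA S fB S' R \<pi>' P' x y x' y'"
proof (rule matched_pairI)
  have P': "P' \<subseteq> S" "inj_on \<pi>' P'" "\<pi>' ` P' \<subseteq> S'" using assms(2) by (auto simp: colour_map_def)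
  have image: "\<pi>' ` P = \<pi> ` P" using assms(4) by auto
  show "set w \<subseteq> P'" if "distinct_adj w" "set w \<subseteq> S" "length w \<le> R" "foldr fA w x = y" for w
    using matched_pair_colours_left[OF assms(1)] that assms(3) by blast
  show "set w \<subseteq> \<pi>' ` P'" if "distinct_adj w" "set w \<subseteq> S'" "length w \<le> R" "foldr fB w x' = y'" for w
    using matched_pair_colours_right[OF assms(1)] that assms(3) image by blast
  show "foldr fA w x = y \<longleftrightarrow> foldr fB (map \<pi>' w) x' = y'"
    if w: "distinct_adj w" "set w \<subseteq> P'" "length w \<le> R" for w
  proof (cases "set w \<subseteq> P")
    case True
    have "map \<pi>' w = map \<pi> w" by (rule map_cong) (use assms(4) True in auto)
    then show ?thesis using matched_pair_foldr_iff[OF assms(1) w(1) True w(3)] by (simp only:)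
  next
    case False
    have "foldr fA w x \<noteq> y"
      using matched_pair_colours_left[OF assms(1) w(1) _ w(3)] w(2) P'(1) False by blast
    moreover have "foldr fB (map \<pi>' w) x' \<noteq> y'"
    proof
      assume "foldr fB (map \<pi>' w) x' = y'"
      moreover have "distinct_adj (map \<pi>' w)"
        using w(1,2) P'(2) by (auto intro: distinct_adj_mapI inj_on_subset)
      ultimately have "set (map \<pi>' w) \<subseteq> \<pi> ` P"
        using matched_pair_colours_right[OF assms(1)] w(2,3) P'(3) by (metis image_mono length_map order_trans set_map)
      then have "\<pi>' ` set w \<subseteq> \<pi>' ` P" using image by simp
      then have "set w \<subseteq> P"
        using inj_on_image_mem_iff[OF P'(2)] w(2) assms(3) by blast
      then show False using False by blast
    qed
    ultimately show ?thesis by blast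
  qed
qed

locale girth_pair =
  A: large_girth A fA S L + B: large_girth B fB S' L
  for A :: "'a set" and fA :: "'c \<Rightarrow> 'a \<Rightarrow> 'a" and S :: "'c set"
    and B :: "'b set" and fB :: "'d \<Rightarrow> 'b \<Rightarrow> 'b" and S' :: "'d set" and L :: nat
begin

abbreviation matched :: "nat \<Rightarrow> ('c \<Rightarrow> 'd) \<Rightarrow> 'c set \<Rightarrow> 'a \<Rightarrow> 'a \<Rightarrow> 'b \<Rightarrow> 'b \<Rightarrow> bool" where
  "matched \<equiv> matched_pair fA S fB S'"

lemma matched_pair_sym:
  assumes "matched R \<pi> P x y x' y'" "colour_map S S' \<pi> P" "x \<in> A" "y \<in> A" "x' \<in> B" "y' \<in> B"
  shows "matched R \<pi> P y x y' x'"
proof (rule matched_pairI)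
  have P: "P \<subseteq> S" "\<pi> ` P \<subseteq> S'" using assms(2) by (auto simp: colour_map_def)
  show "set w \<subseteq> P" if "distinct_adj w" "set w \<subseteq> S" "length w \<le> R" "foldr fA w y = x" for w
    using matched_pair_colours_left[OF assms(1), of "rev w"] A.foldr_eq_iff_rev[of w y x] assms(3,4) that
    by simp
  show "set w \<subseteq> \<pi> ` P" if "distinct_adj w" "set w \<subseteq> S'" "length w \<le> R" "foldr fB w y' = x'" for w
    using matched_pair_colours_right[OF assms(1), of "rev w"] B.foldr_eq_iff_rev[of w y' x'] assms(5,6) that
    by simp
  show "foldr fA w y = x \<longleftrightarrow> foldr fB (map \<pi> w) y' = x'"
    if "distinct_adj w" "set w \<subseteq> P" "length w \<le> R" for w
  proof -
    have "foldr fA w y = x \<longleftrightarrow> foldr fA (rev w) x = y"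
      using A.foldr_eq_iff_rev[of w y x] assms(3,4) that(2) P(1) by auto
    also have "\<dots> \<longleftrightarrow> foldr fB (map \<pi> (rev w)) x' = y'"
      using matched_pair_foldr_iff[OF assms(1), of "rev w"] that by simp
    also have "\<dots> \<longleftrightarrow> foldr fB (map \<pi> w) y' = x'"
      using B.foldr_eq_iff_rev[of "map \<pi> w" y' x'] assms(5,6) that(2) P(2) by (auto simp: rev_map)
    finally show ?thesis .
  qed
qed

lemma matched_pair_refl:
  assumes "colour_map S S' \<pi> P" "R \<le> L" "x \<in> A" "x' \<in> B"
  shows "matched R \<pi> P x x x' x'"
proof (rule matched_pairI)
  have P: "P \<subseteq> S" "inj_on \<pi> P" "\<pi> ` P \<subseteq> S'" using assms(1) by (auto simp: colour_map_def)
  show "set w \<subseteq> P" if "distinct_adj w" "set w \<subseteq> S" "length w \<le> R" "foldr fA w x = x" for w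
    using A.no_short_cycle[of x w] assms(2,3) that by fastforce
  show "set w \<subseteq> \<pi> ` P" if "distinct_adj w" "set w \<subseteq> S'" "length w \<le> R" "foldr fB w x' = x'" for w
    using B.no_short_cycle[of x' w] assms(2,4) that by fastforce
  show "foldr fA w x = x \<longleftrightarrow> foldr fB (map \<pi> w) x' = x'"
    if "distinct_adj w" "set w \<subseteq> P" "length w \<le> R" for w
  proof (cases "w = []")
    case False
    have "distinct_adj (map \<pi> w)" using that(1,2) P(2) by (auto intro: distinct_adj_mapI inj_on_subset)
    then show ?thesis
      using False A.no_short_cycle[of x w] B.no_short_cycle[of x' "map \<pi> w"] assms(2-4) that P
      by auto
  qed simp
qed

end

context girth_pair
begin

lemma matched_pair_shift:
  assumes "matched (2 * R) \<pi> P x y x' y'" "colour_map S S' \<pi> P" "x \<in> A" "x' \<in> B"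
    and w: "distinct_adj w" "set w \<subseteq> P" "length w \<le> R"
  shows "matched R \<pi> P (foldr fA w x) y (foldr fB (map \<pi> w) x') y'"
proof (rule matched_pairI)
  have P: "P \<subseteq> S" "inj_on \<pi> P" "\<pi> ` P \<subseteq> S'" using assms(2) by (auto simp: colour_map_def)
  have wS: "set w \<subseteq> S" using w(2) P(1) by auto
  have w': "distinct_adj (map \<pi> w)" "set (map \<pi> w) \<subseteq> \<pi> ` P" "length (map \<pi> w) \<le> R"
    using w P(2) by (auto intro: distinct_adj_mapI inj_on_subset)
  have wS': "set (map \<pi> w) \<subseteq> S'" using w'(2) P(3) by blast
  show "set u \<subseteq> P"
    if u: "distinct_adj u" "set u \<subseteq> S" "length u \<le> R" "foldr fA u (foldr fA w x) = y" for u
    using A.colours_of_shifted_word[OF matched_pair_colours_left[OF assms(1)] u(1-3) w(1) wS w(3)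
        assms(3) u(4)] w(2) by blast
  show "set u \<subseteq> \<pi> ` P"
    if u: "distinct_adj u" "set u \<subseteq> S'" "length u \<le> R" "foldr fB u (foldr fB (map \<pi> w) x') = y'" for u
    using B.colours_of_shifted_word[OF matched_pair_colours_right[OF assms(1)] u(1-3) w'(1) wS' w'(3)
        assms(4) u(4)] w'(2) by blast
  show "foldr fA u (foldr fA w x) = y \<longleftrightarrow> foldr fB (map \<pi> u) (foldr fB (map \<pi> w) x') = y'"
    if u: "distinct_adj u" "set u \<subseteq> P" "length u \<le> R" for u
  proof -
    have uw: "set u \<subseteq> P" "set w \<subseteq> P" using u(2) w(2) by auto
    then have A_words: "set u \<subseteq> S" "set w \<subseteq> S" using P(1) by blast+
    have B_words: "set (map \<pi> u) \<subseteq> S'" "set (map \<pi> w) \<subseteq> S'"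
      using uw P(3) by (metis image_mono order_trans set_map)+
    have inj: "inj_on \<pi> (set (u @ w))" using uw P(2) by (auto intro: inj_on_subset)
    have v: "distinct_adj (reduce (u @ w))" "set (reduce (u @ w)) \<subseteq> P" "length (reduce (u @ w)) \<le> 2 * R"
      using distinct_adj_reduce set_reduce_subset[of "u @ w"] length_reduce_le[of "u @ w"] uw u(3) w(3)
      by auto
    have "foldr fA u (foldr fA w x) = y \<longleftrightarrow> foldr fA (reduce (u @ w)) x = y"
      using A.foldr_foldr[OF A_words assms(3)] by simp
    also have "\<dots> \<longleftrightarrow> foldr fB (map \<pi> (reduce (u @ w))) x' = y'"
      using matched_pair_foldr_iff[OF assms(1) v] .
    also have "\<dots> \<longleftrightarrow> foldr fB (map \<pi> u) (foldr fB (map \<pi> w) x') = y'"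
      using B.foldr_foldr[OF B_words assms(4)] reduce_map[OF inj] by simp
    finally show ?thesis .
  qed
qed

lemma matched_pair_far:
  assumes "colour_map S S' \<pi> P" "x \<in> A" "y \<in> A" "x' \<in> B" "y' \<in> B"
    and "\<not> near fA S R y x" "\<not> near fB S' R y' x'"
  shows "matched R \<pi> P x y x' y'"
proof -
  have P: "P \<subseteq> S" "\<pi> ` P \<subseteq> S'" using assms(1) by (auto simp: colour_map_def)
  have A: "foldr fA w x \<noteq> y" if "set w \<subseteq> S" "length w \<le> R" for w
  proof
    assume "foldr fA w x = y"
    then have "near fA S R x y" using that unfolding near_def by blast
    then show False using assms(6) A.near_sym[OF assms(2,3)] by simp
  qed
  have B: "foldr fB w x' \<noteq> y'" if "set w \<subseteq> S'" "length w \<le> R" for w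
  proof
    assume "foldr fB w x' = y'"
    then have "near fB S' R x' y'" using that unfolding near_def by blast
    then show False using assms(7) B.near_sym[OF assms(4,5)] by simp
  qed
  show ?thesis
  proof (rule matched_pairI)
    show "set w \<subseteq> P" if "distinct_adj w" "set w \<subseteq> S" "length w \<le> R" "foldr fA w x = y" for w
      using A that by blast
    show "set w \<subseteq> \<pi> ` P" if "distinct_adj w" "set w \<subseteq> S'" "length w \<le> R" "foldr fB w x' = y'" for w
      using B that by blast
    show "foldr fA w x = y \<longleftrightarrow> foldr fB (map \<pi> w) x' = y'"
      if "distinct_adj w" "set w \<subseteq> P" "length w \<le> R" for w
    proof -
      have "set (map \<pi> w) \<subseteq> S'" "set w \<subseteq> S" using that(2) P by auto
      then show ?thesis using A[of w] B[of "map \<pi> w"] that(3) by simp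
    qed
  qed
qed

end

text \<open>A position of the game with n rounds left: pairs of pebbles are tracked up to distance
  2^n, and each remaining round may spend at most 2^n new colours.\<close>

definition good_position ::
  "'a set \<Rightarrow> ('c \<Rightarrow> 'a \<Rightarrow> 'a) \<Rightarrow> 'c set \<Rightarrow> 'b set \<Rightarrow> ('d \<Rightarrow> 'b \<Rightarrow> 'b) \<Rightarrow> 'd set \<Rightarrow> nat \<Rightarrow> nat \<Rightarrow>
    'v set \<Rightarrow> ('v \<Rightarrow> 'a) \<Rightarrow> ('v \<Rightarrow> 'b) \<Rightarrow> ('c \<Rightarrow> 'd) \<Rightarrow> 'c set \<Rightarrow> bool" where
  "good_position A fA S B fB S' Cap n V e e' \<pi> P \<longleftrightarrow>
     colour_map S S' \<pi> P \<and> card P + n * 2 ^ n \<le> Cap \<and> e ` V \<subseteq> A \<and> e' ` V \<subseteq> B \<and>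
     (\<forall>x\<in>V. \<forall>y\<in>V. matched_pair fA S fB S' (2 ^ n) \<pi> P (e x) (e y) (e' x) (e' y))"

lemma good_position_mono:
  "good_position A fA S B fB S' Cap n V e e' \<pi> P \<Longrightarrow> V' \<subseteq> V \<Longrightarrow>
    good_position A fA S B fB S' Cap n V' e e' \<pi> P"
  unfolding good_position_def by blast

lemma good_position_empty:
  "n * 2 ^ n \<le> Cap \<Longrightarrow> good_position A fA S B fB S' Cap n {} e e' \<pi> {}"
  unfolding good_position_def colour_map_def by simp

lemma good_position_swap:
  assumes "good_position A fA S B fB S' Cap n V e e' \<pi> P"
  shows "good_position B fB S' A fA S Cap n V e' e (inv_into P \<pi>) (\<pi> ` P)"
  unfolding good_position_def
proof (intro conjI ballI)
  have colours: "colour_map S S' \<pi> P" using assms by (simp add: good_position_def)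
  then show "colour_map S' S (inv_into P \<pi>) (\<pi> ` P)" by (rule colour_map_swap)
  have "card (\<pi> ` P) = card P" using colours by (simp add: colour_map_def card_image)
  then show "card (\<pi> ` P) + n * 2 ^ n \<le> Cap" using assms by (simp add: good_position_def)
  show "e' ` V \<subseteq> B" "e ` V \<subseteq> A" using assms by (simp_all add: good_position_def)
  fix x y assume "x \<in> V" "y \<in> V"
  then have "matched_pair fA S fB S' (2 ^ n) \<pi> P (e x) (e y) (e' x) (e' y)"
    using assms by (simp add: good_position_def)
  then show "matched_pair fB S' fA S (2 ^ n) (inv_into P \<pi>) (\<pi> ` P) (e' x) (e' y) (e x) (e y)"
    using colours by (rule matched_pair_swap)
qed

lemma (in girth_pair) good_position_insert:
  assumes pos: "good_position A fA S B fB S' Cap n V e e' \<pi> P"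
    and colours: "colour_map S S' \<pi>' P'" "P \<subseteq> P'" "\<forall>i\<in>P. \<pi>' i = \<pi> i"
    and budget: "card P' + (n - 1) * 2 ^ (n - 1) \<le> Cap"
    and "2 ^ (n - 1) \<le> L" "x \<notin> V" "a \<in> A" "b \<in> B"
    and new: "\<And>z. z \<in> V \<Longrightarrow> matched (2 ^ (n - 1)) \<pi>' P' a (e z) b (e' z)"
  shows "good_position A fA S B fB S' Cap (n - 1) (insert x V) (e(x := a)) (e'(x := b)) \<pi>' P'"
proof -
  let ?R = "2 ^ (n - 1) :: nat"
  have eV: "e ` V \<subseteq> A" "e' ` V \<subseteq> B" using pos by (simp_all add: good_position_def)
  have old: "matched ?R \<pi>' P' (e p) (e q) (e' p) (e' q)" if "p \<in> V" "q \<in> V" for p q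
  proof -
    have "matched (2 ^ n) \<pi> P (e p) (e q) (e' p) (e' q)"
      using pos that by (simp add: good_position_def)
    then have "matched (2 ^ n) \<pi>' P' (e p) (e q) (e' p) (e' q)"
      by (rule matched_pair_extend[OF _ colours])
    moreover have "?R \<le> 2 ^ n" by (simp add: power_increasing)
    ultimately show ?thesis by (rule matched_pair_mono)
  qed
  have pairs: "matched ?R \<pi>' P' ((e(x := a)) p) ((e(x := a)) q) ((e'(x := b)) p) ((e'(x := b)) q)"
    if "p \<in> insert x V" "q \<in> insert x V" for p q
  proof (cases "p = x"; cases "q = x")
    assume "p = x" "q = x"
    then show ?thesis using matched_pair_refl[OF colours(1) assms(6,8,9)] by simp
  next
    assume "p = x" "q \<noteq> x"
    then have "q \<in> V" using that by simp
    then show ?thesis using new[of q] \<open>p = x\<close> \<open>q \<noteq> x\<close> by simp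
  next
    assume "p \<noteq> x" "q = x"
    then have "p \<in> V" using that by simp
    then have "e p \<in> A" "e' p \<in> B" using eV by auto
    then have "matched ?R \<pi>' P' (e p) a (e' p) b"
      using matched_pair_sym[OF new[OF \<open>p \<in> V\<close>] colours(1) assms(8)] assms(9) by blast
    then show ?thesis using \<open>p \<noteq> x\<close> \<open>q = x\<close> by simp
  next
    assume "p \<noteq> x" "q \<noteq> x"
    then show ?thesis using old that by simp
  qed
  have "(e(x := a)) ` insert x V \<subseteq> A" "(e'(x := b)) ` insert x V \<subseteq> B"
    using eV assms(7-9) by (auto simp: image_subset_iff)
  then show ?thesis
    unfolding good_position_def using colours(1) budget pairs by simp
qed

primrec quant_depth :: "fm \<Rightarrow> nat" where
  "quant_depth Tru = 0"
| "quant_depth (Eq x y) = 0"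
| "quant_depth (Rel x y) = 0"
| "quant_depth (Neg a) = quant_depth a"
| "quant_depth (Conj a b) = max (quant_depth a) (quant_depth b)"
| "quant_depth (Ex x a) = Suc (quant_depth a)"

primrec vars :: "fm \<Rightarrow> nat set" where
  "vars Tru = {}"
| "vars (Eq x y) = {x, y}"
| "vars (Rel x y) = {x, y}"
| "vars (Neg a) = vars a"
| "vars (Conj a b) = vars a \<union> vars b"
| "vars (Ex x a) = insert x (vars a)"

lemma finite_vars: "finite (vars a)"
  by (induction a) auto

lemma freevars_subset_vars: "freevars a \<subseteq> vars a"
  by (induction a) auto

lemma game_budget:
  "0 < n \<Longrightarrow> k + n * 2 ^ n \<le> Cap \<Longrightarrow> k + 2 ^ (n - 1) + (n - 1) * 2 ^ (n - 1) \<le> (Cap :: nat)"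
proof -
  assume "0 < n" "k + n * 2 ^ n \<le> Cap"
  moreover have "2 ^ (n - 1) + (n - 1) * 2 ^ (n - 1) = n * (2 :: nat) ^ (n - 1)"
    using \<open>0 < n\<close> by (cases n) simp_all
  moreover have "n * (2 :: nat) ^ (n - 1) \<le> n * 2 ^ n" by (simp add: power_increasing)
  ultimately show ?thesis by linarith
qed

locale ef_pair = girth_pair A fA S B fB S' L
  for A :: "'a set" and fA :: "'c \<Rightarrow> 'a \<Rightarrow> 'a" and S :: "'c set"
    and B :: "'b set" and fB :: "'d \<Rightarrow> 'b \<Rightarrow> 'b" and S' :: "'d set" and L :: nat +
  fixes N Cap :: nat
  assumes far_A: "Y \<subseteq> A \<Longrightarrow> finite Y \<Longrightarrow> card Y \<le> N \<Longrightarrow> \<exists>a\<in>A. \<forall>y\<in>Y. \<not> near fA S L y a"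
    and far_B: "Z \<subseteq> B \<Longrightarrow> finite Z \<Longrightarrow> card Z \<le> N \<Longrightarrow> \<exists>b\<in>B. \<forall>z\<in>Z. \<not> near fB S' L z b"
    and fit_AB: "colours_fit S S' Cap" and fit_BA: "colours_fit S' S Cap"
begin

abbreviation good :: "nat \<Rightarrow> 'v set \<Rightarrow> ('v \<Rightarrow> 'a) \<Rightarrow> ('v \<Rightarrow> 'b) \<Rightarrow> ('c \<Rightarrow> 'd) \<Rightarrow> 'c set \<Rightarrow> bool" where
  "good \<equiv> good_position A fA S B fB S' Cap"

lemma ef_pair_swap: "ef_pair B fB S' A fA S L N Cap"
  by unfold_locales
    (fact B.closed B.involutive B.no_short_cycle A.closed A.involutive A.no_short_cycle
      far_B far_A fit_BA fit_AB)+

lemma forth_near: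
  assumes pos: "good n V e e' \<pi> P" and "0 < n" "2 ^ n \<le> L" "x \<notin> V"
    and j: "j \<in> V" and near: "near fA S (2 ^ (n - 1)) (e j) a"
  shows "\<exists>b\<in>B. \<exists>\<pi>' P'. good (n - 1) (insert x V) (e(x := a)) (e'(x := b)) \<pi>' P'"
proof -
  define R :: nat where "R = 2 ^ (n - 1)"
  have R2: "2 * R = 2 ^ n" using \<open>0 < n\<close> by (cases n) (simp_all add: R_def)
  have colours: "colour_map S S' \<pi> P" and eV: "e ` V \<subseteq> A" "e' ` V \<subseteq> B"
    and pairs: "\<And>z. z \<in> V \<Longrightarrow> matched (2 * R) \<pi> P (e j) (e z) (e' j) (e' z)"
    using pos R2 j by (simp_all add: good_position_def)
  have "card P + n * 2 ^ n \<le> Cap" using pos by (simp add: good_position_def)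
  then have budget: "card P + R + (n - 1) * R \<le> Cap" unfolding R_def by (rule game_budget[OF \<open>0 < n\<close>])
  have ej: "e j \<in> A" "e' j \<in> B" using eV j by auto
  obtain w where w: "distinct_adj w" "set w \<subseteq> S" "length w \<le> R" and a: "foldr fA w (e j) = a"
    by (rule A.near_reduced[OF near[folded R_def] ej(1)])
  have "card (set w) \<le> R" using w(3) card_length le_trans by blast
  obtain \<pi>' where \<pi>': "colour_map S S' \<pi>' (P \<union> set w)" "\<forall>i\<in>P. \<pi>' i = \<pi> i"
    by (rule colour_map_extend[OF colours fit_AB _ w(2)]) (use budget \<open>card (set w) \<le> R\<close> in simp_all)
  define b where "b = foldr fB (map \<pi>' w) (e' j)"
  have "set (map \<pi>' w) \<subseteq> S'" using \<pi>'(1) unfolding colour_map_def by auto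
  then have "b \<in> B" unfolding b_def using ej(2) by (rule B.foldr_closed)
  have "a \<in> A" unfolding a[symmetric] using w(2) ej(1) by (rule A.foldr_closed)
  have new: "matched R \<pi>' (P \<union> set w) a (e z) b (e' z)" if "z \<in> V" for z
  proof -
    have "matched (2 * R) \<pi>' (P \<union> set w) (e j) (e z) (e' j) (e' z)"
      using matched_pair_extend[OF pairs[OF that] \<pi>'(1) _ \<pi>'(2)] by simp
    from matched_pair_shift[OF this \<pi>'(1) ej w(1) _ w(3)] show ?thesis
      unfolding a b_def by simp
  qed
  have "card (P \<union> set w) + (n - 1) * R \<le> Cap"
    using card_Un_le[of P "set w"] \<open>card (set w) \<le> R\<close> budget by linarith
  moreover have "R \<le> L" using R2 assms(3) by simp
  ultimately show ?thesis
    using good_position_insert[OF pos \<pi>'(1) Un_upper1 \<pi>'(2) _ _ \<open>x \<notin> V\<close> \<open>a \<in> A\<close> \<open>b \<in> B\<close>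
        new[unfolded R_def]] \<open>b \<in> B\<close>
    unfolding R_def by blast
qed

lemma forth_far:
  assumes pos: "good n V e e' \<pi> P" and "0 < n" "2 ^ n \<le> L" "finite V" "card V \<le> N" "x \<notin> V" "a \<in> A"
    and far: "\<forall>j\<in>V. \<not> near fA S (2 ^ (n - 1)) (e j) a"
  shows "\<exists>b\<in>B. \<exists>\<pi>' P'. good (n - 1) (insert x V) (e(x := a)) (e'(x := b)) \<pi>' P'"
proof -
  define R :: nat where "R = 2 ^ (n - 1)"
  have R2: "2 * R = 2 ^ n" using \<open>0 < n\<close> by (cases n) (simp_all add: R_def)
  have RL: "R \<le> L" using R2 assms(3) by simp
  have colours: "colour_map S S' \<pi> P" and eV: "e ` V \<subseteq> A" "e' ` V \<subseteq> B"
    using pos by (simp_all add: good_position_def)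
  have "card P + n * 2 ^ n \<le> Cap" using pos by (simp add: good_position_def)
  then have "card P + R + (n - 1) * R \<le> Cap" unfolding R_def by (rule game_budget[OF \<open>0 < n\<close>])
  then have budget: "card P + (n - 1) * R \<le> Cap" by linarith
  obtain b where "b \<in> B" and b: "\<forall>y\<in>e' ` V. \<not> near fB S' L y b"
    using far_B[OF eV(2) finite_imageI[OF assms(4)] le_trans[OF card_image_le[OF assms(4)] assms(5)]]
    by blast
  have new: "matched R \<pi> P a (e z) b (e' z)" if "z \<in> V" for z
  proof (rule matched_pair_far[OF colours assms(7)])
    show "e z \<in> A" "e' z \<in> B" using eV that by auto
    show "\<not> near fA S R (e z) a" using far that by (simp add: R_def)
    show "\<not> near fB S' R (e' z) b"
    proof
      assume "near fB S' R (e' z) b"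
      then have "near fB S' L (e' z) b" using RL by (rule near_mono)
      then show False using b that by blast
    qed
  qed (fact \<open>b \<in> B\<close>)
  show ?thesis
    using good_position_insert[OF pos colours order_refl _ budget[unfolded R_def] RL[unfolded R_def]
        assms(6,7) \<open>b \<in> B\<close> new[unfolded R_def]] \<open>b \<in> B\<close>
    by blast
qed

lemma forth:
  assumes "good n V e e' \<pi> P" "0 < n" "2 ^ n \<le> L" "finite V" "card V \<le> N" "x \<notin> V" "a \<in> A"
  shows "\<exists>b\<in>B. \<exists>\<pi>' P'. good (n - 1) (insert x V) (e(x := a)) (e'(x := b)) \<pi>' P'"
proof (cases "\<exists>j\<in>V. near fA S (2 ^ (n - 1)) (e j) a")
  case True
  then show ?thesis using forth_near[OF assms(1-3,6)] by blast
next
  case False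
  then show ?thesis using forth_far[OF assms] by blast
qed

end

context ef_pair
begin

theorem sat_iff_sat:
  assumes "good n (freevars \<phi>) e e' \<pi> P" "quant_depth \<phi> \<le> n" "card (vars \<phi>) \<le> N" "2 ^ n \<le> L"
  shows "sat A (coloured_edge fA S) e \<phi> \<longleftrightarrow> sat B (coloured_edge fB S') e' \<phi>"
  using assms
proof (induction \<phi> arbitrary: n e e' \<pi> P)
  case (Eq x y)
  then have "matched (2 ^ n) \<pi> P (e x) (e y) (e' x) (e' y)" by (simp add: good_position_def)
  then show ?case using matched_pair_eq by simp
next
  case (Rel x y)
  then have "matched (2 ^ n) \<pi> P (e x) (e y) (e' x) (e' y)" "colour_map S S' \<pi> P"
    by (simp_all add: good_position_def)
  from matched_pair_edge[OF this] show ?case by simp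
next
  case (Conj \<phi>1 \<phi>2)
  have "card (vars \<phi>1) \<le> N" "card (vars \<phi>2) \<le> N"
    using Conj.prems(3) card_mono[OF finite_vars, of _ "Conj \<phi>1 \<phi>2"] by fastforce+
  moreover have "good n (freevars \<phi>1) e e' \<pi> P" "good n (freevars \<phi>2) e e' \<pi> P"
    using good_position_mono[OF Conj.prems(1)] by auto
  ultimately have "sat A (coloured_edge fA S) e \<phi>1 \<longleftrightarrow> sat B (coloured_edge fB S') e' \<phi>1"
    and "sat A (coloured_edge fA S) e \<phi>2 \<longleftrightarrow> sat B (coloured_edge fB S') e' \<phi>2"
    using Conj.IH Conj.prems(2,4) by simp_all
  then show ?case by simp
next
  case (Ex x \<psi>)
  let ?V = "freevars (Ex x \<psi>)"
  have n: "0 < n" "quant_depth \<psi> \<le> n - 1" using Ex.prems(2) by auto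
  have "2 ^ (n - 1) \<le> (2::nat) ^ n" by (simp add: power_increasing)
  then have L: "2 ^ (n - 1) \<le> L" using Ex.prems(4) by (rule order_trans)
  have V: "finite ?V" "card ?V \<le> N" "x \<notin> ?V" "freevars \<psi> \<subseteq> insert x ?V"
    using freevars_subset_vars[of "Ex x \<psi>"] finite_vars[of "Ex x \<psi>"] Ex.prems(3)
      card_mono[of "vars (Ex x \<psi>)" ?V] finite_subset by fastforce+
  have vars: "card (vars \<psi>) \<le> N"
    using Ex.prems(3) card_mono[OF finite_vars, of "vars \<psi>" "Ex x \<psi>"] by fastforce
  show ?case
  proof
    assume "sat A (coloured_edge fA S) e (Ex x \<psi>)"
    then obtain a where "a \<in> A" and a: "sat A (coloured_edge fA S) (e(x := a)) \<psi>" by auto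
    then obtain b \<pi>' P' where "b \<in> B" and pos: "good (n - 1) (insert x ?V) (e(x := a)) (e'(x := b)) \<pi>' P'"
      using forth[OF Ex.prems(1) n(1) Ex.prems(4) V(1-3)] by blast
    then have "sat B (coloured_edge fB S') (e'(x := b)) \<psi>"
      using Ex.IH[OF good_position_mono[OF pos V(4)] n(2) vars L] a by blast
    then show "sat B (coloured_edge fB S') e' (Ex x \<psi>)" using \<open>b \<in> B\<close> by auto
  next
    interpret swapped: ef_pair B fB S' A fA S L N Cap by (rule ef_pair_swap)
    assume "sat B (coloured_edge fB S') e' (Ex x \<psi>)"
    then obtain b where "b \<in> B" and b: "sat B (coloured_edge fB S') (e'(x := b)) \<psi>" by auto
    then obtain a \<pi>' P' where "a \<in> A"
      and pos: "swapped.good (n - 1) (insert x ?V) (e'(x := b)) (e(x := a)) \<pi>' P'"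
      using swapped.forth[OF good_position_swap[OF Ex.prems(1)] n(1) Ex.prems(4) V(1-3)] by blast
    then have "sat A (coloured_edge fA S) (e(x := a)) \<psi>"
      using Ex.IH[OF good_position_mono[OF good_position_swap[OF pos] V(4)] n(2) vars L] b by blast
    then show "sat A (coloured_edge fA S) e (Ex x \<psi>)" using \<open>a \<in> A\<close> by auto
  qed
qed simp_all

corollary holds_iff_holds:
  assumes "sentence \<phi>" "quant_depth \<phi> \<le> n" "card (vars \<phi>) \<le> N" "2 ^ n \<le> L" "n * 2 ^ n \<le> Cap"
    and "A \<noteq> {}" "B \<noteq> {}"
  shows "holds A (coloured_edge fA S) \<phi> \<longleftrightarrow> holds B (coloured_edge fB S') \<phi>"
proof -
  have iff: "sat A (coloured_edge fA S) e \<phi> \<longleftrightarrow> sat B (coloured_edge fB S') e' \<phi>" for e e'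
    using sat_iff_sat[OF _ assms(2-4)] good_position_empty[OF assms(5)] assms(1)
    unfolding sentence_def by metis
  obtain a b where "a \<in> A" "b \<in> B" using assms(6,7) by blast
  show ?thesis unfolding holds_def
  proof (intro iffI allI impI)
    fix e' :: "nat \<Rightarrow> 'b"
    assume "\<forall>e. (\<forall>n. e n \<in> A) \<longrightarrow> sat A (coloured_edge fA S) e \<phi>"
    then have "sat A (coloured_edge fA S) (\<lambda>_. a) \<phi>" using \<open>a \<in> A\<close> by simp
    then show "sat B (coloured_edge fB S') e' \<phi>" using iff by blast
  next
    fix e :: "nat \<Rightarrow> 'a"
    assume "\<forall>e'. (\<forall>n. e' n \<in> B) \<longrightarrow> sat B (coloured_edge fB S') e' \<phi>"
    then have "sat B (coloured_edge fB S') (\<lambda>_. b) \<phi>" using \<open>b \<in> B\<close> by simp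
    then show "sat A (coloured_edge fA S) e \<phi>" using iff by blast
  qed
qed

end

section \<open>The tree and its finite approximations\<close>

lemma foldr_apfst: "foldr (\<lambda>i. apfst (f i)) w (x, c) = (foldr f w x, c)"
  by (induction w) auto

lemma large_girth_copies:
  assumes "large_girth X f S L"
  shows "large_girth (X \<times> C) (\<lambda>i. apfst (f i)) S L"
proof -
  interpret large_girth X f S L by fact
  show ?thesis
  proof
    show "apfst (f i) p \<in> X \<times> C" if "i \<in> S" "p \<in> X \<times> C" for i p
      using that closed by auto
    show "apfst (f i) (apfst (f i) p) = p" if "i \<in> S" "p \<in> X \<times> C" for i p
      using that involutive by auto
    show "foldr (\<lambda>i. apfst (f i)) w p \<noteq> p"
      if "p \<in> X \<times> C" "distinct_adj w" "set w \<subseteq> S" "w \<noteq> []" "length w \<le> L" for p w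
      using that no_short_cycle[of "fst p" w] by (cases p) (simp add: foldr_apfst)
  qed
qed

lemma copies_far:
  assumes "X \<noteq> {}" "finite Y" "card Y < K"
  shows "\<exists>a\<in>X \<times> {0..<K}. \<forall>y\<in>Y. \<not> near (\<lambda>i. apfst (f i)) S R y a"
proof -
  have "card (snd ` Y) < card {0..<K}" using card_image_le[OF assms(2), of snd] assms(3) by simp
  have "\<not> {0..<K} \<subseteq> snd ` Y"
  proof
    assume "{0..<K} \<subseteq> snd ` Y"
    then have "card {0..<K} \<le> card (snd ` Y)" using assms(2) by (intro card_mono) auto
    then show False using \<open>card (snd ` Y) < card {0..<K}\<close> by simp
  qed
  then obtain c where c: "c \<in> {0..<K}" "c \<notin> snd ` Y" by blast
  obtain x where "x \<in> X" using assms(1) by blast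
  have "\<not> near (\<lambda>i. apfst (f i)) S R y (x, c)" if "y \<in> Y" for y
  proof
    assume "near (\<lambda>i. apfst (f i)) S R y (x, c)"
    then have "snd y = c" unfolding near_def by (cases y) (auto simp: foldr_apfst)
    then show False using c(2) that by blast
  qed
  then show ?thesis using \<open>x \<in> X\<close> c(1) by blast
qed

definition reduced_words :: "'c set \<Rightarrow> 'c list set" where
  "reduced_words S = {w. distinct_adj w \<and> set w \<subseteq> S}"

lemma large_girth_reduced_words: "large_girth (reduced_words S) red_cons S L"
proof
  show "red_cons i w \<in> reduced_words S" if "i \<in> S" "w \<in> reduced_words S" for i w
    using that set_red_cons_subset[of i w] distinct_adj_red_cons[of w i]
    unfolding reduced_words_def by auto
  show "red_cons i (red_cons i w) = w" if "w \<in> reduced_words S" for i w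
    using that unfolding reduced_words_def by (simp add: red_cons_red_cons)
  show "foldr red_cons v w \<noteq> w" if "w \<in> reduced_words S" "distinct_adj v" "v \<noteq> []" for v w
  proof -
    have "foldr red_cons v w = reduce (v @ w)"
      using that(1) by (simp add: reduce_append reduce_id reduced_words_def)
    then show ?thesis using reduce_append_neq[OF that(2) _ that(3)] that(1)
      unfolding reduced_words_def by simp
  qed
qed

definition word_ball :: "'c set \<Rightarrow> nat \<Rightarrow> 'c list set" where
  "word_ball S L = {w. distinct_adj w \<and> set w \<subseteq> S \<and> length w \<le> L}"

definition ball_red_cons :: "'c set \<Rightarrow> nat \<Rightarrow> 'c \<Rightarrow> 'c list \<Rightarrow> 'c list" where
  "ball_red_cons S L i w =
     (if w \<in> word_ball S L \<and> red_cons i w \<in> word_ball S L then red_cons i w else w)"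

lemma ball_red_cons_ball_red_cons: "ball_red_cons S L i (ball_red_cons S L i w) = w"
proof (cases "w \<in> word_ball S L \<and> red_cons i w \<in> word_ball S L")
  case True
  then have "red_cons i (red_cons i w) = w" by (simp add: word_ball_def red_cons_red_cons)
  with True show ?thesis by (simp add: ball_red_cons_def)
next
  case False
  then have "ball_red_cons S L i w = w" unfolding ball_red_cons_def by (rule if_not_P)
  then show ?thesis by simp
qed

lemma ball_red_cons_in_ball: "w \<in> word_ball S L \<Longrightarrow> ball_red_cons S L i w \<in> word_ball S L"
  by (simp add: ball_red_cons_def)

lemma ball_red_cons_permutes: "ball_red_cons S L i permutes word_ball S L"
proof (rule bij_imp_permutes)
  show "bij_betw (ball_red_cons S L i) (word_ball S L) (word_ball S L)"
    by (rule bij_betw_byWitness[where f' = "ball_red_cons S L i"])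
      (simp_all add: ball_red_cons_ball_red_cons ball_red_cons_in_ball image_subset_iff)
  show "ball_red_cons S L i w = w" if "w \<notin> word_ball S L" for w
    using that by (simp add: ball_red_cons_def)
qed

lemma foldr_ball_red_cons_Nil: "w \<in> word_ball S L \<Longrightarrow> foldr (ball_red_cons S L) w [] = w"
proof (induction w)
  case (Cons i w)
  have "distinct_adj (i # w)" using Cons.prems by (simp add: word_ball_def)
  then have "red_cons i w = i # w" by (rule red_cons_distinct_adj)
  moreover have "w \<in> word_ball S L"
    using Cons.prems distinct_adj_ConsD by (auto simp: word_ball_def)
  ultimately show ?case using Cons by (simp add: ball_red_cons_def)
qed simp

lemma finite_word_ball: "finite S \<Longrightarrow> finite (word_ball S L)"
proof -
  have "word_ball S L \<subseteq> {w. set w \<subseteq> S \<and> length w \<le> L}" by (auto simp: word_ball_def)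
  then show "finite S \<Longrightarrow> finite (word_ball S L)" using finite_lists_length_le finite_subset by blast
qed

lemma foldr_comp: "foldr (\<lambda>i p. g i \<circ> p) w p = foldr g w \<circ> p"
  by (induction w) (simp_all add: fun_eq_iff)

lemma large_girth_permutations:
  "large_girth {p. p permutes word_ball S L} (\<lambda>i p. ball_red_cons S L i \<circ> p) S L"
proof
  show "ball_red_cons S L i \<circ> p \<in> {p. p permutes word_ball S L}"
    if "p \<in> {p. p permutes word_ball S L}" for i p
    using that permutes_compose[OF _ ball_red_cons_permutes] by simp
  show "ball_red_cons S L i \<circ> (ball_red_cons S L i \<circ> p) = p" for i p
    by (simp add: fun_eq_iff ball_red_cons_ball_red_cons)
  show "foldr (\<lambda>i p. ball_red_cons S L i \<circ> p) w p \<noteq> p"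
    if "p \<in> {p. p permutes word_ball S L}" "distinct_adj w" "set w \<subseteq> S" "w \<noteq> []" "length w \<le> L"
    for p w
  proof
    assume "foldr (\<lambda>i p. ball_red_cons S L i \<circ> p) w p = p"
    then have fixed: "foldr (ball_red_cons S L) w \<circ> p = p" by (simp add: foldr_comp)
    have "surj p" using that(1) by (simp add: permutes_surj)
    then obtain x where "[] = p x" by (rule surjE)
    then have "foldr (ball_red_cons S L) w [] = []" using fun_cong[OF fixed, of x] by simp
    moreover have "w \<in> word_ball S L" using that(2,3,5) by (simp add: word_ball_def)
    then have "foldr (ball_red_cons S L) w [] = w" by (rule foldr_ball_red_cons_Nil)
    ultimately show False using that(4) by simp
  qed
qed

section \<open>Pseudofiniteness\<close>

lemma sat_transport:
  assumes "inj_on h D" "\<forall>n. e n \<in> D"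
  shows "sat (h ` D) (\<lambda>u v. R (inv_into D h u) (inv_into D h v)) (h \<circ> e) \<phi> \<longleftrightarrow> sat D R e \<phi>"
  using assms(2)
proof (induction \<phi> arbitrary: e)
  case (Eq x y)
  then show ?case using assms(1) by (simp add: inj_on_eq_iff)
next
  case (Rel x y)
  then show ?case using assms(1) by simp
next
  case (Ex x \<phi>)
  let ?R = "\<lambda>u v. R (inv_into D h u) (inv_into D h v)"
  have step: "sat (h ` D) ?R ((h \<circ> e)(x := h d)) \<phi> \<longleftrightarrow> sat D R (e(x := d)) \<phi>" if "d \<in> D" for d
  proof -
    have "(h \<circ> e)(x := h d) = h \<circ> e(x := d)" by auto
    moreover have "\<forall>n. (e(x := d)) n \<in> D" using Ex.prems that by simp
    ultimately show ?thesis using Ex.IH by (simp only:)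
  qed
  have "sat (h ` D) ?R (h \<circ> e) (Ex x \<phi>) \<longleftrightarrow> (\<exists>d\<in>D. sat (h ` D) ?R ((h \<circ> e)(x := h d)) \<phi>)"
    unfolding sat.simps by blast
  also have "\<dots> \<longleftrightarrow> sat D R e (Ex x \<phi>)" using step by simp
  finally show ?case .
qed simp_all

lemma holds_transport:
  assumes "inj_on h D"
  shows "holds (h ` D) (\<lambda>u v. R (inv_into D h u) (inv_into D h v)) \<phi> \<longleftrightarrow> holds D R \<phi>"
proof
  assume H: "holds (h ` D) (\<lambda>u v. R (inv_into D h u) (inv_into D h v)) \<phi>"
  show "holds D R \<phi>" unfolding holds_def
  proof (intro allI impI)
    fix e :: "nat \<Rightarrow> 'a" assume e: "\<forall>n. e n \<in> D"
    then have "\<forall>n. (h \<circ> e) n \<in> h ` D" by simp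
    then show "sat D R e \<phi>" using H sat_transport[OF assms e] unfolding holds_def by blast
  qed
next
  assume H: "holds D R \<phi>"
  show "holds (h ` D) (\<lambda>u v. R (inv_into D h u) (inv_into D h v)) \<phi>" unfolding holds_def
  proof (intro allI impI)
    fix e' :: "nat \<Rightarrow> 'b" assume e': "\<forall>n. e' n \<in> h ` D"
    define e where "e = inv_into D h \<circ> e'"
    have e: "\<forall>n. e n \<in> D" and "h \<circ> e = e'"
      using e' by (auto simp: e_def f_inv_into_f inv_into_into)
    then show "sat (h ` D) (\<lambda>u v. R (inv_into D h u) (inv_into D h v)) e' \<phi>"
      using H sat_transport[OF assms e] unfolding holds_def by blast
  qed
qed

text \<open>Entailment only quantifies over structures on sets of natural numbers, so countable
  models are reached through an injection into the naturals.\<close>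

lemma holds_if_entails:
  fixes D :: "'a::countable set"
  assumes "entails T \<phi>" "D \<noteq> {}" "\<forall>\<psi>\<in>T. holds D R \<psi>"
  shows "holds D R \<phi>"
proof -
  let ?R = "\<lambda>u v. R (inv_into D to_nat u) (inv_into D to_nat v)"
  have inj: "inj_on to_nat D" by (simp add: inj_on_def)
  have "\<forall>\<psi>\<in>T. holds (to_nat ` D) ?R \<psi>" using assms(3) holds_transport[OF inj] by simp
  then have "holds (to_nat ` D) ?R \<phi>"
    using assms(1,2) unfolding entails_def by simp
  then show ?thesis using holds_transport[OF inj] by simp
qed

lemma finite_nat_model:
  assumes "finite D" "D \<noteq> {}" "holds D R \<phi>"
  shows "\<exists>(D' :: nat set) R'. finite D' \<and> D' \<noteq> {} \<and> holds D' R' \<phi>"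
proof -
  obtain h :: "'a \<Rightarrow> nat" where h: "inj_on h D"
    using finite_imp_inj_to_nat_seg[OF assms(1)] by blast
  show ?thesis
    by (intro exI[of _ "h ` D"] exI[of _ "\<lambda>u v. R (inv_into D h u) (inv_into D h v)"])
      (simp add: assms holds_transport[OF h])
qed

lemma colours_fit_refl: "finite S \<Longrightarrow> colours_fit S S Cap"
  unfolding colours_fit_def by (auto intro: card_mono)

lemma colours_fit_infinite: "infinite S' \<Longrightarrow> colours_fit S S' Cap"
  unfolding colours_fit_def by simp

lemma colours_fit_atLeastLessThan: "colours_fit S {0..<Cap} Cap"
  unfolding colours_fit_def by simp

lemma large_girth_tree_copies:
  "large_girth (reduced_words S \<times> C) (\<lambda>i. apfst (red_cons i)) S L"
  by (rule large_girth_copies[OF large_girth_reduced_words])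

text \<open>The finite graph uses the colours of the tree when there are finitely many of them, and
  otherwise enough colours for a game of the required length.\<close>

theorem pseudofinite_if_trees_model:
  fixes S' :: "'c::countable set"
  assumes model: "\<And>K :: nat. 0 < K \<Longrightarrow> \<forall>\<psi>\<in>T. holds (reduced_words S' \<times> {0..<K}) (coloured_edge (\<lambda>i. apfst (red_cons i)) S') \<psi>"
    and colours: "\<And>Cap. \<exists>S :: 'c set. finite S \<and> colours_fit S S' Cap \<and> colours_fit S' S Cap"
  shows "pseudofinite T"
  unfolding pseudofinite_def
proof (intro allI impI)
  fix \<phi> assume "sentence \<phi>" "entails T \<phi>"
  define n where "n = quant_depth \<phi>"
  define N where "N = card (vars \<phi>)"
  define L :: nat where "L = 2 ^ n"
  obtain S :: "'c set" where S: "finite S" "colours_fit S S' (n * 2 ^ n)" "colours_fit S' S (n * 2 ^ n)"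
    using colours[of "n * 2 ^ n"] by blast
  let ?A = "{p. p permutes word_ball S L} \<times> {0..<Suc N}"
  let ?fA = "\<lambda>i. apfst (\<lambda>p. ball_red_cons S L i \<circ> p)"
  let ?B = "reduced_words S' \<times> {0..<Suc N}"
  let ?fB = "\<lambda>i. apfst (red_cons i)"
  have A_ne: "{p. p permutes word_ball S L} \<noteq> {}" by (auto intro: permutes_id)
  have B_ne: "reduced_words S' \<noteq> {}" by (auto simp: reduced_words_def intro!: exI[of _ "[]"])
  interpret ef_pair ?A ?fA S ?B ?fB S' L N "n * 2 ^ n"
  proof (intro ef_pair.intro girth_pair.intro ef_pair_axioms.intro)
    show "large_girth ?A ?fA S L" by (rule large_girth_copies[OF large_girth_permutations])
    show "large_girth ?B ?fB S' L" by (rule large_girth_tree_copies)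
    show "\<exists>a\<in>?A. \<forall>y\<in>Y. \<not> near ?fA S L y a" if "finite Y" "card Y \<le> N" for Y
      using copies_far[OF A_ne that(1), of "Suc N" "\<lambda>i p. ball_red_cons S L i \<circ> p" S L] that(2) by simp
    show "\<exists>b\<in>?B. \<forall>z\<in>Z. \<not> near ?fB S' L z b" if "finite Z" "card Z \<le> N" for Z
      using copies_far[OF B_ne that(1), of "Suc N" red_cons S' L] that(2) by simp
    show "colours_fit S S' (n * 2 ^ n)" "colours_fit S' S (n * 2 ^ n)" by (fact S(2), fact S(3))
  qed
  have "holds ?B (coloured_edge ?fB S') \<phi>"
    by (rule holds_if_entails[OF \<open>entails T \<phi>\<close>]) (use B_ne model[where K = "Suc N"] in auto)
  then have "holds ?A (coloured_edge ?fA S) \<phi>"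
    using holds_iff_holds[OF \<open>sentence \<phi>\<close>] A_ne B_ne by (simp add: n_def N_def L_def)
  moreover have "finite ?A" using S(1) by (simp add: finite_permutations finite_word_ball)
  ultimately show "\<exists>(D :: nat set) R. finite D \<and> D \<noteq> {} \<and> holds D R \<phi>"
    using A_ne by (intro finite_nat_model) simp_all
qed

lemma pseudofinite_T_r: "pseudofinite (T_r r)"
proof (rule pseudofinite_if_trees_model)
  fix K :: nat
  show "\<forall>\<psi>\<in>T_r r. holds (reduced_words {0..<r} \<times> {0..<K}) (coloured_edge (\<lambda>i. apfst (red_cons i)) {0..<r}) \<psi>"
  proof
    fix \<psi> assume "\<psi> \<in> T_r r"
    then consider "\<psi> \<in> Gr" | m where "\<psi> = tau m" "3 \<le> m" | "\<psi> = deg_exactly r"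
      unfolding T_r_def by blast
    then show "holds (reduced_words {0..<r} \<times> {0..<K}) (coloured_edge (\<lambda>i. apfst (red_cons i)) {0..<r}) \<psi>"
    proof cases
      case 1
      then show ?thesis by (intro large_girth.holds_Gr[OF large_girth_tree_copies[where L = 1]]) simp_all
    next
      case (2 m)
      then show ?thesis by (simp add: large_girth.holds_tau[OF large_girth_tree_copies[where L = m]])
    next
      case 3
      then show ?thesis by (simp add: large_girth.holds_deg_exactly[OF large_girth_tree_copies[where L = 2]])
    qed
  qed
qed (auto intro: colours_fit_refl)

lemma pseudofinite_T_inf: "pseudofinite T_inf"
proof (rule pseudofinite_if_trees_model)
  fix K :: nat
  show "\<forall>\<psi>\<in>T_inf. holds (reduced_words UNIV \<times> {0..<K}) (coloured_edge (\<lambda>i. apfst (red_cons i)) (UNIV :: nat set)) \<psi>"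
  proof
    fix \<psi> assume "\<psi> \<in> T_inf"
    then consider "\<psi> \<in> Gr" | m where "\<psi> = tau m" "3 \<le> m" | m where "\<psi> = sigma m"
      unfolding T_inf_def by blast
    then show "holds (reduced_words UNIV \<times> {0..<K}) (coloured_edge (\<lambda>i. apfst (red_cons i)) (UNIV :: nat set)) \<psi>"
    proof cases
      case 1
      then show ?thesis by (intro large_girth.holds_Gr[OF large_girth_tree_copies[where L = 1]]) simp_all
    next
      case (2 m)
      then show ?thesis by (simp add: large_girth.holds_tau[OF large_girth_tree_copies[where L = m]])
    next
      case (3 m)
      then show ?thesis by (simp add: large_girth.holds_sigma[OF large_girth_tree_copies[where L = 2]])
    qed
  qed
  show "\<exists>S :: nat set. finite S \<and> colours_fit S (UNIV :: nat set) Cap \<and> colours_fit (UNIV :: nat set) S Cap" for Cap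
    by (intro exI[of _ "{0..<Cap}"]) (simp add: colours_fit_infinite infinite_UNIV_nat colours_fit_atLeastLessThan)
qed

theorem theorem4p5:
  shows "(\<forall>r. pseudofinite (T_r r)) \<and> pseudofinite T_inf"
  using pseudofinite_T_r pseudofinite_T_inf by blast

end
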